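(* Let $S_n=K_{1,n}$ be a star on $n+1\ge4$ vertices. Then $\pi_T(S_n)=n+1$.
   Context: A sequence is nonrepetitive if no block of consecutive terms has the form $r_1\dots r_nr_1\dots r_n$ with $n\ge1$. A (strong) total Thue colouring of a graph $G$ is a colouring of $V(G)\cup E(G)$ such that for every path $v_1,e_1,v_2,\dots,e_{k-1},v_k$ in $G$ the sequence of colours of $v_1,e_1,\dots,v_k$ is nonrepetitive, the sequence of colours of $v_1,\dots,v_k$ is nonrepetitive, and the sequence of colours of $e_1,\dots,e_{k-1}$ is nonrepetitive. $\pi_T(G)$ is the minimum number of colours in a total Thue colouring of $G$. *)

theory Defs
  imports Main
begin

definition nonrepetitive :: "'c list \<Rightarrow> bool" where
  "nonrepetitive w \<longleftrightarrow> \<not> (\<exists>xs ys zs. ys \<noteq> [] \<and> w = xs @ ys @ ys @ zs)"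

definition is_path :: "'a set \<Rightarrow> 'a set set \<Rightarrow> 'a list \<Rightarrow> bool" where
  "is_path V E vs \<longleftrightarrow> vs \<noteq> [] \<and> distinct vs \<and> set vs \<subseteq> V \<and>
     (\<forall>i. Suc i < length vs \<longrightarrow> {vs ! i, vs ! Suc i} \<in> E)"

fun path_edges :: "'a list \<Rightarrow> 'a set list" where
  "path_edges (v # w # vs) = {v, w} # path_edges (w # vs)"
| "path_edges _ = []"

fun total_seq :: "('a \<Rightarrow> 'c) \<Rightarrow> ('a set \<Rightarrow> 'c) \<Rightarrow> 'a list \<Rightarrow> 'c list" where
  "total_seq cv ce (v # w # vs) = cv v # ce {v, w} # total_seq cv ce (w # vs)"
| "total_seq cv ce [v] = [cv v]"
| "total_seq cv ce [] = []"

definition total_thue_colouring ::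
  "'a set \<Rightarrow> 'a set set \<Rightarrow> ('a \<Rightarrow> nat) \<Rightarrow> ('a set \<Rightarrow> nat) \<Rightarrow> bool" where
  "total_thue_colouring V E cv ce \<longleftrightarrow>
     (\<forall>vs. is_path V E vs \<longrightarrow>
        nonrepetitive (total_seq cv ce vs) \<and>
        nonrepetitive (map cv vs) \<and>
        nonrepetitive (map ce (path_edges vs)))"

definition num_colours ::
  "'a set \<Rightarrow> 'a set set \<Rightarrow> ('a \<Rightarrow> nat) \<Rightarrow> ('a set \<Rightarrow> nat) \<Rightarrow> nat" where
  "num_colours V E cv ce = card (cv ` V \<union> ce ` E)"

definition pi_T :: "'a set \<Rightarrow> 'a set set \<Rightarrow> nat" where
  "pi_T V E = (LEAST k. \<exists>cv ce. total_thue_colouring V E cv ce \<and> num_colours V E cv ce = k)"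

definition star_V :: "nat \<Rightarrow> nat set" where
  "star_V n = {0..n}"

definition star_E :: "nat \<Rightarrow> nat set set" where
  "star_E n = {{0, i} | i. 1 \<le> i \<and> i \<le> n}"

end

theory Submission
  imports Defs
begin

text \<open>Any two edges of the star lie on a common path through the centre, and so do the centre
  and any edge; hence the centre colour and the \<open>n\<close> edge colours are pairwise distinct, since
  otherwise the edge sequence of a two-edge path or the total sequence leaf, edge, centre would
  contain a square of length one. Conversely, colour the centre \<open>0\<close>, the edge to leaf \<open>i\<close> by
  \<open>i\<close>, and leaf \<open>i\<close> by \<open>i mod n + 1\<close>. Paths in a star have at most three vertices, so only
  squares of length one and two have to be excluded, which is a finite check.\<close>

lemma not_nonrepetitive_square: "ys \<noteq> [] \<Longrightarrow> \<not> nonrepetitive (xs @ ys @ ys @ zs)"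
  unfolding nonrepetitive_def by blast

lemma nonrepetitive_Nil: "nonrepetitive []"
  unfolding nonrepetitive_def by simp

lemma nonrepetitive_singleton: "nonrepetitive [a]"
  unfolding nonrepetitive_def by (auto simp: Cons_eq_append_conv append_eq_Cons_conv)

lemma nonrepetitive_two_iff: "nonrepetitive [a, b] \<longleftrightarrow> a \<noteq> b"
proof
  show "nonrepetitive [a, b] \<Longrightarrow> a \<noteq> b"
    using not_nonrepetitive_square[of "[a]" "[]" "[]"] by auto
  show "a \<noteq> b \<Longrightarrow> nonrepetitive [a, b]"
    unfolding nonrepetitive_def by (auto simp: Cons_eq_append_conv append_eq_Cons_conv)
qed

lemma nonrepetitive_three_iff: "nonrepetitive [a, b, c] \<longleftrightarrow> a \<noteq> b \<and> b \<noteq> c"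
proof
  show "nonrepetitive [a, b, c] \<Longrightarrow> a \<noteq> b \<and> b \<noteq> c"
    using not_nonrepetitive_square[of "[a]" "[]" "[c]"] not_nonrepetitive_square[of "[b]" "[a]" "[]"]
    by auto
  show "a \<noteq> b \<and> b \<noteq> c \<Longrightarrow> nonrepetitive [a, b, c]"
    unfolding nonrepetitive_def by (auto simp: Cons_eq_append_conv append_eq_Cons_conv)
qed

lemma nonrepetitive_five_iff:
  "nonrepetitive [a, b, c, d, e] \<longleftrightarrow>
     a \<noteq> b \<and> b \<noteq> c \<and> c \<noteq> d \<and> d \<noteq> e \<and> (a \<noteq> c \<or> b \<noteq> d) \<and> (b \<noteq> d \<or> c \<noteq> e)"
proof
  show "nonrepetitive [a, b, c, d, e] \<Longrightarrow> a \<noteq> b \<and> b \<noteq> c \<and> c \<noteq> d \<and> d \<noteq> e \<and>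
      (a \<noteq> c \<or> b \<noteq> d) \<and> (b \<noteq> d \<or> c \<noteq> e)"
    using not_nonrepetitive_square[of "[a]" "[]" "[c, d, e]"]
      not_nonrepetitive_square[of "[b]" "[a]" "[d, e]"]
      not_nonrepetitive_square[of "[c]" "[a, b]" "[e]"]
      not_nonrepetitive_square[of "[d]" "[a, b, c]" "[]"]
      not_nonrepetitive_square[of "[a, b]" "[]" "[e]"]
      not_nonrepetitive_square[of "[b, c]" "[a]" "[]"]
    by auto
  show "a \<noteq> b \<and> b \<noteq> c \<and> c \<noteq> d \<and> d \<noteq> e \<and> (a \<noteq> c \<or> b \<noteq> d) \<and> (b \<noteq> d \<or> c \<noteq> e)
      \<Longrightarrow> nonrepetitive [a, b, c, d, e]"
    unfolding nonrepetitive_def by (auto simp: Cons_eq_append_conv append_eq_Cons_conv)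
qed

lemma star_E_iff:
  "{a, b} \<in> star_E n \<longleftrightarrow> (a = 0 \<and> b \<in> {1..n}) \<or> (b = 0 \<and> a \<in> {1..n})"
  unfolding star_E_def by (auto simp: doubleton_eq_iff)

lemma is_path_star_iff:
  "is_path (star_V n) (star_E n) vs \<longleftrightarrow>
     (\<exists>v\<le>n. vs = [v]) \<or>
     (\<exists>i\<in>{1..n}. vs = [0, i] \<or> vs = [i, 0]) \<or>
     (\<exists>i\<in>{1..n}. \<exists>j\<in>{1..n}. i \<noteq> j \<and> vs = [i, 0, j])"
    (is "_ \<longleftrightarrow> ?short_path")
proof
  assume path: "is_path (star_V n) (star_E n) vs"
  then have edge: "\<And>i. Suc i < length vs \<Longrightarrow> {vs ! i, vs ! Suc i} \<in> star_E n"
    unfolding is_path_def by blast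
  consider v where "vs = [v]" | u v where "vs = [u, v]" | u v w where "vs = [u, v, w]"
    | u v w x r where "vs = u # v # w # x # r"
    using path unfolding is_path_def by (metis list.exhaust)
  then show ?short_path
  proof cases
    case (4 u v w x r)
    \<comment> \<open>the first and third edges would both contain the centre\<close>
    with edge[of 0] edge[of 2] path show ?thesis
      by (auto simp: star_E_iff is_path_def numeral_2_eq_2)
  qed (use path edge[of 0] edge[of 1] in \<open>auto simp: star_E_iff is_path_def star_V_def\<close>)
next
  show "?short_path \<Longrightarrow> is_path (star_V n) (star_E n) vs"
    by (auto simp: is_path_def star_V_def star_E_iff less_Suc_eq nth_Cons split: nat.splits)
qed

lemma star_E_eq_image: "star_E n = (\<lambda>i. {0, i}) ` {1..n}"
  unfolding star_E_def by auto

lemma finite_star_E: "finite (star_E n)"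
  by (simp add: star_E_eq_image)

lemma card_star_E: "card (star_E n) = n"
proof -
  have "inj_on (\<lambda>i. {0, i}) {1..n :: nat}"
    by (auto intro: inj_onI simp: doubleton_eq_iff)
  then show ?thesis
    by (simp add: star_E_eq_image card_image)
qed

lemma star_edge_colours_distinct:
  assumes "total_thue_colouring (star_V n) (star_E n) cv ce"
  shows "inj_on ce (star_E n)"
proof (rule inj_onI)
  fix e e' assume "e \<in> star_E n" "e' \<in> star_E n" and same_colour: "ce e = ce e'"
  then obtain i j where i: "i \<in> {1..n}" "e = {i, 0}" and j: "j \<in> {1..n}" "e' = {0, j}"
    unfolding star_E_def by (auto simp: insert_commute)
  show "e = e'"
  proof (rule ccontr)
    assume "e \<noteq> e'"
    with i j have "is_path (star_V n) (star_E n) [i, 0, j]"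
      by (auto simp: is_path_star_iff)
    with assms i j have "nonrepetitive [ce e, ce e']"
      unfolding total_thue_colouring_def by auto
    with same_colour show False
      by (simp add: nonrepetitive_two_iff)
  qed
qed

lemma star_centre_colour_not_edge_colour:
  assumes "total_thue_colouring (star_V n) (star_E n) cv ce"
  shows "cv 0 \<notin> ce ` star_E n"
proof
  assume "cv 0 \<in> ce ` star_E n"
  then obtain i where i: "i \<in> {1..n}" and same_colour: "ce {i, 0} = cv 0"
    unfolding star_E_def by (auto simp: insert_commute)
  then have "is_path (star_V n) (star_E n) [i, 0]"
    by (simp add: is_path_star_iff)
  with assms have "nonrepetitive [cv i, ce {i, 0}, cv 0]"
    unfolding total_thue_colouring_def by auto
  with same_colour show False
    by (simp add: nonrepetitive_three_iff)
qed

lemma star_num_colours_lower_bound: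
  assumes "total_thue_colouring (star_V n) (star_E n) cv ce"
  shows "n + 1 \<le> num_colours (star_V n) (star_E n) cv ce"
proof -
  have "card (insert (cv 0) (ce ` star_E n)) = n + 1"
    using star_edge_colours_distinct[OF assms] star_centre_colour_not_edge_colour[OF assms]
    by (simp add: card_image card_star_E finite_star_E)
  moreover have "insert (cv 0) (ce ` star_E n) \<subseteq> cv ` star_V n \<union> ce ` star_E n"
    by (auto simp: star_V_def)
  moreover have "finite (cv ` star_V n \<union> ce ` star_E n)"
    by (simp add: star_V_def finite_star_E)
  ultimately show ?thesis
    unfolding num_colours_def by (metis card_mono)
qed

text \<open>Together with the edge colouring \<open>Max\<close>, which gives the edge \<open>{0, i}\<close> colour \<open>i\<close>,
  leaf \<open>i\<close> receives the colour of the next edge around the star.\<close>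

definition star_vertex_colour :: "nat \<Rightarrow> nat \<Rightarrow> nat" where
  "star_vertex_colour n v = (if v = 0 then 0 else v mod n + 1)"

lemma star_vertex_colour_leaf: "i \<in> {1..n} \<Longrightarrow> star_vertex_colour n i \<in> {1..n}"
  unfolding star_vertex_colour_def by (cases "i = n") (auto simp: Suc_le_eq)

lemma star_vertex_colour_leaf_ne: "2 \<le> n \<Longrightarrow> i \<in> {1..n} \<Longrightarrow> star_vertex_colour n i \<noteq> i"
  unfolding star_vertex_colour_def by (cases "i = n") auto

lemma star_colouring_total_thue:
  assumes "2 \<le> n"
  shows "total_thue_colouring (star_V n) (star_E n) (star_vertex_colour n) Max"
  unfolding total_thue_colouring_def
proof (intro allI impI)
  fix vs assume "is_path (star_V n) (star_E n) vs"
  have leaf: "star_vertex_colour n i \<in> {1..n}" "star_vertex_colour n i \<noteq> i" if "i \<in> {1..n}" for i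
    using star_vertex_colour_leaf[OF that] star_vertex_colour_leaf_ne[OF assms that] by simp_all
  have centre: "star_vertex_colour n 0 = 0"
    by (simp add: star_vertex_colour_def)
  from \<open>is_path (star_V n) (star_E n) vs\<close>
  show "nonrepetitive (total_seq (star_vertex_colour n) Max vs) \<and>
      nonrepetitive (map (star_vertex_colour n) vs) \<and> nonrepetitive (map Max (path_edges vs))"
    unfolding is_path_star_iff
  proof (elim disjE bexE exE conjE)
    fix v assume "vs = [v]"
    then show ?thesis
      by (simp add: nonrepetitive_Nil nonrepetitive_singleton)
  next
    fix i assume "i \<in> {1..n}" "vs = [0, i]"
    with leaf[of i] show ?thesis
      by (simp add: centre nonrepetitive_singleton nonrepetitive_two_iff nonrepetitive_three_iff)
  next
    fix i assume "i \<in> {1..n}" "vs = [i, 0]"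
    with leaf[of i] show ?thesis
      by (simp add: centre nonrepetitive_singleton nonrepetitive_two_iff nonrepetitive_three_iff
          insert_commute)
  next
    fix i j assume "i \<in> {1..n}" "j \<in> {1..n}" "i \<noteq> j" "vs = [i, 0, j]"
    with leaf[of i] leaf[of j] show ?thesis
      by (simp add: centre nonrepetitive_two_iff nonrepetitive_three_iff nonrepetitive_five_iff
          insert_commute)
  qed
qed

lemma star_colouring_num_colours:
  "num_colours (star_V n) (star_E n) (star_vertex_colour n) Max = n + 1"
proof -
  have "star_vertex_colour n ` star_V n \<subseteq> {0..n}"
    using star_vertex_colour_leaf by (auto simp: star_V_def star_vertex_colour_def)
  moreover have "0 \<in> star_vertex_colour n ` star_V n"
    by (rule image_eqI[of _ _ 0]) (simp_all add: star_V_def star_vertex_colour_def)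
  moreover have "Max ` star_E n = {1..n}"
    by (simp add: star_E_eq_image image_image)
  moreover have "{0..n} = insert 0 {1..n :: nat}"
    by auto
  ultimately have "star_vertex_colour n ` star_V n \<union> Max ` star_E n = {0..n}"
    by auto
  then show ?thesis
    unfolding num_colours_def by simp
qed

theorem theorem17:
  fixes n :: nat
  assumes "n + 1 \<ge> 4"
  shows "pi_T (star_V n) (star_E n) = n + 1"
  unfolding pi_T_def
proof (rule Least_equality)
  show "\<exists>cv ce. total_thue_colouring (star_V n) (star_E n) cv ce \<and>
      num_colours (star_V n) (star_E n) cv ce = n + 1"
    using assms star_colouring_total_thue[of n] star_colouring_num_colours[of n] by auto
  show "\<And>k. \<exists>cv ce. total_thue_colouring (star_V n) (star_E n) cv ce \<and>
      num_colours (star_V n) (star_E n) cv ce = k \<Longrightarrow> n + 1 \<le> k"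
    using star_num_colours_lower_bound by blast
qed

end
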